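(* $c(8)\ge 6$.
   Context: $\mathbb{F}_q$ is the finite field with $q$ elements. Hamming distance $d(u,v)=|\{i:u_i\ne v_i\}|$ on $\mathbb{F}_q^3$; $B(u)=\{v:d(u,v)\le1\}$; $E(u)=\bigcup_{\lambda\in\mathbb{F}_q}B(\lambda u)$. A set $\mathcal{H}\subseteq\mathbb{F}_q^3$ is a short covering if $\bigcup_{h\in\mathcal{H}}E(h)=\mathbb{F}_q^3$; $c(q)$ is the minimum cardinality of a short covering of $\mathbb{F}_q^3$. *)

theory Defs
  imports "HOL-Analysis.Analysis"
begin

definition hamming_dist :: "'a ^ 'n \<Rightarrow> 'a ^ 'n \<Rightarrow> nat" where
  "hamming_dist u v = card {i. u $ i \<noteq> v $ i}"

definition hball1 :: "'a ^ 'n \<Rightarrow> ('a ^ 'n) set" where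
  "hball1 u = {v. hamming_dist u v \<le> 1}"

definition ext_ball :: "('a::field) ^ 'n \<Rightarrow> ('a ^ 'n) set" where
  "ext_ball u = (\<Union>c::'a. hball1 (c *s u))"

definition short_covering :: "(('a::field) ^ 3) set \<Rightarrow> bool" where
  "short_covering H \<longleftrightarrow> (\<Union>h\<in>H. ext_ball h) = UNIV"

definition short_covering_number :: "('a::{field,finite}) itself \<Rightarrow> nat" where
  "short_covering_number _ = Min {card H | H :: ('a ^ 3) set. short_covering H}"

end

theory Submission
  imports Defs
begin

text \<open>
  Let \<open>H\<close> be a short covering with \<open>|H| \<le> 5\<close> over \<open>F = \<bbbF>\<^sub>8\<close>, and let \<open>G = F\<^sup>*\<close>, of order 7.
  The vectors \<open>(1, t, 0)\<close> with \<open>t \<in> G\<close> can only be covered by ratios \<open>h\<^sub>2 / h\<^sub>1\<close> of elements of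
  \<open>H\<close>, unless some nonzero \<open>h \<in> H\<close> vanishes in the last coordinate; as \<open>|H| < 7\<close>, every
  coordinate is the zero coordinate of some nonzero element of \<open>H\<close>. A weighted count then shows
  that the three sets of coordinate ratios \<open>h\<^sub>1/h\<^sub>3\<close>, \<open>h\<^sub>2/h\<^sub>3\<close>, \<open>h\<^sub>1/h\<^sub>2\<close> have at most 10 elements
  in total, so their complements \<open>A, B, C\<close> in \<open>G\<close> have at least 11 elements in total. By the
  pigeonhole principle in the group \<open>G\<close>, some \<open>a \<in> A\<close>, \<open>b \<in> B\<close> have \<open>a / b \<in> C\<close>, and the vector
  \<open>(a, b, 1)\<close> is not covered.
\<close>

lemma hamming_dist_le_1_iff:
  "hamming_dist u v \<le> 1 \<longleftrightarrow> (\<exists>l. \<forall>i. i \<noteq> l \<longrightarrow> u $ i = v $ i)"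
proof -
  have "card {i. u $ i \<noteq> v $ i} \<le> Suc 0 \<longleftrightarrow>
        (\<forall>a\<in>{i. u $ i \<noteq> v $ i}. \<forall>b\<in>{i. u $ i \<noteq> v $ i}. a = b)"
    by (rule card_le_Suc0_iff_eq) simp
  also have "\<dots> \<longleftrightarrow> (\<exists>l. \<forall>i. i \<noteq> l \<longrightarrow> u $ i = v $ i)"
    by (auto simp: Ball_def; metis)
  finally show ?thesis
    unfolding hamming_dist_def One_nat_def .
qed

lemma mem_ext_ball_iff:
  "v \<in> ext_ball h \<longleftrightarrow> (\<exists>c l. \<forall>i. i \<noteq> l \<longrightarrow> c * h $ i = v $ i)"
  unfolding ext_ball_def hball1_def mem_Collect_eq hamming_dist_le_1_iff by simp

lemma short_covering_UNIV: "short_covering (UNIV :: ('a::field ^ 3) set)"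
proof -
  have "h \<in> ext_ball h" for h :: "'a ^ 3"
    unfolding mem_ext_ball_iff by (rule exI[of _ 1]) simp
  then show ?thesis
    unfolding short_covering_def by blast
qed

lemma card_nonzero: "card {x::'a::{zero,finite}. x \<noteq> 0} + 1 = CARD('a)"
proof -
  have "{x::'a. x \<noteq> 0} = UNIV - {0}" by auto
  then show ?thesis
    by (simp add: card_Diff_singleton)
qed

lemma short_coveringE:
  assumes "short_covering H"
  obtains h c l where "h \<in> H" "\<And>m. m \<noteq> l \<Longrightarrow> c * h $ m = v $ m"
proof -
  have "v \<in> (\<Union>h\<in>H. ext_ball h)"
    using assms unfolding short_covering_def by simp
  then obtain h where "h \<in> H" "v \<in> ext_ball h"
    by blast
  then show ?thesis
    using that unfolding mem_ext_ball_iff by blast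
qed

lemma mult_eq_divide_if_mult_eq_1:
  fixes c x y :: "'a::field"
  assumes "c * x = 1"
  shows "c * y = y / x"
proof -
  have "x \<noteq> 0"
    using assms by auto
  then have "c * y = (c * x) * y / x"
    by simp
  then show ?thesis
    using assms by simp
qed

definition coord_ratios :: "('a::field ^ 'n) set \<Rightarrow> 'n \<Rightarrow> 'n \<Rightarrow> 'a set" where
  "coord_ratios H i j = (\<lambda>h. h $ i / h $ j) ` {h \<in> H. h $ i \<noteq> 0 \<and> h $ j \<noteq> 0}"

lemma card_coord_ratios_le:
  "finite H \<Longrightarrow> card (coord_ratios H i j) \<le> card {h \<in> H. h $ i \<noteq> 0 \<and> h $ j \<noteq> 0}"
  unfolding coord_ratios_def by (rule card_image_le) simp

lemma short_covering_axis_vector: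
  fixes H :: "('a::field ^ 3) set"
  assumes cov: "short_covering H" and ijk: "distinct [i, j, k]" and "t \<noteq> 0"
  shows "(\<exists>h\<in>H. h \<noteq> 0 \<and> h $ k = 0) \<or> t \<in> coord_ratios H j i"
proof -
  define w :: "'a ^ 3" where "w = (\<chi> l. if l = i then 1 else if l = j then t else 0)"
  have ij: "i \<noteq> j" "i \<noteq> k" "j \<noteq> k"
    using ijk by auto
  then have w: "w $ i = 1" "w $ j = t" "w $ k = 0"
    unfolding w_def by simp_all
  obtain h c l where h: "h \<in> H" and agree: "\<And>m. m \<noteq> l \<Longrightarrow> c * h $ m = w $ m"
    using short_coveringE[OF cov, where v = w] by blast
  show ?thesis
  proof (cases "l = k")
    case True
    then have "c * h $ i = 1" "c * h $ j = t"
      using agree ij w by auto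
    then have "h $ j \<noteq> 0" "h $ i \<noteq> 0" "t = h $ j / h $ i"
      using \<open>t \<noteq> 0\<close> mult_eq_divide_if_mult_eq_1 by auto
    then show ?thesis
      unfolding coord_ratios_def using h by blast
  next
    case False
    have "c * h $ i = 1 \<or> c * h $ j = t"
      using agree ij w by metis
    then have "c \<noteq> 0" "h \<noteq> 0"
      using \<open>t \<noteq> 0\<close> by auto
    moreover have "c * h $ k = 0"
      using agree False w by simp
    ultimately show ?thesis
      using h by auto
  qed
qed

lemma short_covering_vanishing_coordinate:
  fixes H :: "('a::{field,finite} ^ 3) set"
  assumes cov: "short_covering H" and ijk: "distinct [i, j, k]" and small: "card H + 1 < CARD('a)"
  shows "\<exists>h\<in>H. h \<noteq> 0 \<and> h $ k = 0"
proof (rule ccontr)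
  assume "\<not> ?thesis"
  then have "{x. x \<noteq> 0} \<subseteq> coord_ratios H j i"
    using short_covering_axis_vector[OF cov ijk] by blast
  then have "card {x::'a. x \<noteq> 0} \<le> card (coord_ratios H j i)"
    by (rule card_mono[rotated]) simp
  also have "\<dots> \<le> card H"
    by (rule order_trans[OF card_coord_ratios_le card_mono]) auto
  finally show False
    using small card_nonzero[where 'a='a] by linarith
qed

lemma short_covering_triple:
  fixes H :: "('a::field ^ 3) set"
  assumes cov: "short_covering H" and "a \<noteq> 0" "b \<noteq> 0"
  shows "a \<in> coord_ratios H 1 3 \<or> b \<in> coord_ratios H 2 3 \<or> a / b \<in> coord_ratios H 1 2"
proof -
  obtain h c l where h: "h \<in> H"
    and agree: "\<And>m. m \<noteq> l \<Longrightarrow> c * h $ m = vector [a, b, 1] $ m"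
    using short_coveringE[OF cov, where v = "vector [a, b, 1]"] by blast
  consider "l = 1" | "l = 2" | "l = 3"
    using exhaust_3 by blast
  then show ?thesis
  proof cases
    case 1
    then have "c * h $ 2 = b" "c * h $ 3 = 1"
      using agree by auto
    then have "h $ 2 \<noteq> 0" "h $ 3 \<noteq> 0" "b = h $ 2 / h $ 3"
      using \<open>b \<noteq> 0\<close> mult_eq_divide_if_mult_eq_1 by auto
    then show ?thesis
      unfolding coord_ratios_def using h by blast
  next
    case 2
    then have "c * h $ 1 = a" "c * h $ 3 = 1"
      using agree by auto
    then have "h $ 1 \<noteq> 0" "h $ 3 \<noteq> 0" "a = h $ 1 / h $ 3"
      using \<open>a \<noteq> 0\<close> mult_eq_divide_if_mult_eq_1 by auto
    then show ?thesis
      unfolding coord_ratios_def using h by blast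
  next
    case 3
    then have "c * h $ 1 = a" "c * h $ 2 = b"
      using agree by auto
    then have "h $ 1 \<noteq> 0" "h $ 2 \<noteq> 0" "a / b = h $ 1 / h $ 2"
      using \<open>a \<noteq> 0\<close> \<open>b \<noteq> 0\<close> by auto
    then show ?thesis
      unfolding coord_ratios_def using h by blast
  qed
qed

text \<open>Each nonzero vector has weight 6, 5 or 6 according as it has zero, one or two zero coordinates.\<close>

lemma weighted_zero_pattern_count:
  fixes H :: "('a::{zero,finite} ^ 3) set"
  shows "2 * (card {h\<in>H. h $ 1 \<noteq> 0 \<and> h $ 2 \<noteq> 0} + card {h\<in>H. h $ 1 \<noteq> 0 \<and> h $ 3 \<noteq> 0}
              + card {h\<in>H. h $ 2 \<noteq> 0 \<and> h $ 3 \<noteq> 0})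
       + 3 * (card {h\<in>H. h \<noteq> 0 \<and> h $ 1 = 0} + card {h\<in>H. h \<noteq> 0 \<and> h $ 2 = 0}
              + card {h\<in>H. h \<noteq> 0 \<and> h $ 3 = 0})
     \<le> 6 * card H"
proof -
  let ?ind = "\<lambda>P. if P then 1 else 0 :: nat"
  have card_eq: "card {h\<in>H. P h} = (\<Sum>h\<in>H. ?ind (P h))" for P
    by (simp add: sum.inter_filter[symmetric])
  have nonzero: "h \<noteq> 0 \<longleftrightarrow> h $ 1 \<noteq> 0 \<or> h $ 2 \<noteq> 0 \<or> h $ 3 \<noteq> 0" for h :: "'a ^ 3"
    by (metis (mono_tags) exhaust_3 vec_eq_iff zero_index)
  have "(\<Sum>h\<in>H. 2 * (?ind (h $ 1 \<noteq> 0 \<and> h $ 2 \<noteq> 0) + ?ind (h $ 1 \<noteq> 0 \<and> h $ 3 \<noteq> 0)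
                      + ?ind (h $ 2 \<noteq> 0 \<and> h $ 3 \<noteq> 0))
               + 3 * (?ind (h \<noteq> 0 \<and> h $ 1 = 0) + ?ind (h \<noteq> 0 \<and> h $ 2 = 0)
                      + ?ind (h \<noteq> 0 \<and> h $ 3 = 0)))
        \<le> (\<Sum>h\<in>H. 6)"
    by (rule sum_mono) (auto simp: nonzero)
  then show ?thesis
    unfolding card_eq by (simp add: sum.distrib sum_distrib_left mult.commute)
qed

lemma exists_image_mem_if_card_gt:
  assumes "finite G" "inj_on f A" "f ` A \<subseteq> G" "C \<subseteq> G" "card G < card A + card C"
  shows "\<exists>a\<in>A. f a \<in> C"
proof (rule ccontr)
  assume "\<not> ?thesis"
  then have "f ` A \<subseteq> G - C"
    using assms(3) by blast
  then have "card A \<le> card (G - C)"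
    using assms(1,2) card_mono card_image by (metis finite_Diff)
  also have "\<dots> = card G - card C"
    using assms(1,4) by (simp add: card_Diff_subset finite_subset)
  finally show False
    using assms(5) card_mono[OF assms(1,4)] by linarith
qed

text \<open>If \<open>A / B\<close> misses \<open>C\<close>, then \<open>|A| + |C|\<close>, \<open>|B| + |C|\<close> and \<open>|A| + |B|\<close> are all at most \<open>|F\<^sup>*|\<close>.\<close>

lemma exists_quotient_mem:
  fixes A B C :: "'a::{field,finite} set"
  defines "G \<equiv> {x::'a. x \<noteq> 0}"
  assumes sub: "A \<subseteq> G" "B \<subseteq> G" "C \<subseteq> G" and ne: "A \<noteq> {}" "B \<noteq> {}" "C \<noteq> {}"
    and large: "3 * card G < 2 * (card A + card B + card C)"
  shows "\<exists>a\<in>A. \<exists>b\<in>B. a / b \<in> C"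
proof -
  have "card G < card B + card C \<or> card G < card A + card C \<or> card G < card A + card B"
  proof (rule ccontr)
    assume "\<not> ?thesis"
    then have "card B + card C \<le> card G" "card A + card C \<le> card G" "card A + card B \<le> card G"
      by auto
    then show False
      using large unfolding distrib_left by linarith
  qed
  then consider "card G < card B + card C" | "card G < card A + card C" | "card G < card A + card B"
    by blast
  then show ?thesis
  proof cases
    case 1
    obtain a where a: "a \<in> A" using ne by blast
    have "inj_on (\<lambda>y. a / y) B" "(\<lambda>y. a / y) ` B \<subseteq> G"
      using a sub unfolding G_def by (auto simp: inj_on_def field_simps)
    then show ?thesis
      using exists_image_mem_if_card_gt[of G "\<lambda>y. a / y" B C] sub(3) 1 a by auto
  next
    case 2
    obtain b where b: "b \<in> B" using ne by blast
    have "inj_on (\<lambda>x. x / b) A" "(\<lambda>x. x / b) ` A \<subseteq> G"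
      using b sub unfolding G_def by (auto simp: inj_on_def)
    then show ?thesis
      using exists_image_mem_if_card_gt[of G "\<lambda>x. x / b" A C] sub(3) 2 b by auto
  next
    case 3
    obtain c where c: "c \<in> C" using ne by blast
    have "inj_on (\<lambda>y. c * y) B" "(\<lambda>y. c * y) ` B \<subseteq> G"
      using c sub unfolding G_def by (auto simp: inj_on_def)
    then obtain b where "b \<in> B" "c * b \<in> A"
      using exists_image_mem_if_card_gt[of G "\<lambda>y. c * y" B A] sub(1) 3 by (auto simp: add.commute)
    moreover have "c * b / b = c"
      using \<open>b \<in> B\<close> sub unfolding G_def by auto
    ultimately show ?thesis
      using c by metis
  qed
qed

lemma not_short_covering_if_card_small:
  fixes H :: "('a::{field,finite} ^ 3) set"
  assumes small: "card H + 1 < CARD('a)" and weight_bound: "6 * card H < 3 * CARD('a) + 7"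
  shows "\<not> short_covering H"
proof
  assume cov: "short_covering H"
  define G where "G = {x::'a. x \<noteq> 0}"
  define p where "p i j = card {h\<in>H. h $ i \<noteq> 0 \<and> h $ j \<noteq> 0}" for i j :: 3
  have card_G: "card G + 1 = CARD('a)"
    unfolding G_def by (rule card_nonzero)
  have "card {h\<in>H. h \<noteq> 0 \<and> h $ k = 0} \<ge> 1" if "distinct [i, j, k]" for i j k :: 3
    using short_covering_vanishing_coordinate[OF cov that small]
    by (metis (mono_tags, lifting) One_nat_def Suc_leI card_gt_0_iff empty_iff finite mem_Collect_eq)
  from this[of 2 3 1] this[of 1 3 2] this[of 1 2 3]
  have "2 * (p 1 2 + p 1 3 + p 2 3) + 9 \<le> 6 * card H"
    using weighted_zero_pattern_count[of H] unfolding p_def by simp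
  then have sum_p: "2 * p 1 2 + 2 * p 1 3 + 2 * p 2 3 + 10 \<le> 6 * card H"
    by presburger \<comment> \<open>by parity\<close>
  have p_le: "p i j \<le> card H" for i j
    unfolding p_def by (rule card_mono) auto
  have compl: "card G \<le> card (G - coord_ratios H i j) + p i j" for i j
  proof -
    have "card G \<le> card ((G - coord_ratios H i j) \<union> coord_ratios H i j)"
      by (rule card_mono) auto
    also have "\<dots> \<le> card (G - coord_ratios H i j) + card (coord_ratios H i j)"
      by (rule card_Un_le)
    finally have "card G \<le> card (G - coord_ratios H i j) + card (coord_ratios H i j)" .
    then show ?thesis
      using card_coord_ratios_le[of H i j] unfolding p_def by simp
  qed
  define A B C where "A = G - coord_ratios H 1 3" and "B = G - coord_ratios H 2 3"
    and "C = G - coord_ratios H 1 2"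
  have cards: "card G \<le> card A + p 1 3" "card G \<le> card B + p 2 3" "card G \<le> card C + p 1 2"
    using compl unfolding A_def B_def C_def by auto
  then have "A \<noteq> {}" "B \<noteq> {}" "C \<noteq> {}"
    using p_le[of 1 3] p_le[of 2 3] p_le[of 1 2] small card_G by fastforce+
  moreover have "3 * card G < 2 * card A + 2 * card B + 2 * card C"
    using cards sum_p weight_bound card_G by linarith
  then have "3 * card G < 2 * (card A + card B + card C)"
    by simp
  moreover have "A \<subseteq> G" "B \<subseteq> G" "C \<subseteq> G"
    unfolding A_def B_def C_def by auto
  ultimately obtain a b where "a \<in> A" "b \<in> B" "a / b \<in> C"
    using exists_quotient_mem[of A B C] unfolding G_def by blast
  then have "a \<noteq> 0" "b \<noteq> 0" "a \<notin> coord_ratios H 1 3" "b \<notin> coord_ratios H 2 3"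
    "a / b \<notin> coord_ratios H 1 2"
    unfolding A_def B_def C_def G_def by simp_all
  then show False
    using short_covering_triple[OF cov \<open>a \<noteq> 0\<close> \<open>b \<noteq> 0\<close>] by simp
qed

theorem proposition21:
  assumes "CARD('a::{field,finite}) = 8"
  shows "short_covering_number TYPE('a) \<ge> 6"
proof -
  let ?S = "{card H | H :: ('a ^ 3) set. short_covering H}"
  have "finite ?S" "?S \<noteq> {}"
    using short_covering_UNIV by auto
  moreover have "6 \<le> n" if "n \<in> ?S" for n
  proof (rule ccontr)
    obtain H :: "('a ^ 3) set" where n: "n = card H" and cov: "short_covering H"
      using \<open>n \<in> ?S\<close> by blast
    assume "\<not> 6 \<le> n"
    with assms have "\<not> short_covering H"
      by (intro not_short_covering_if_card_small) (simp_all add: n)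
    then show False
      using cov by blast
  qed
  ultimately show ?thesis
    unfolding short_covering_number_def by simp
qed

end
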